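(* Let $n,m\ge 1$ and $N\ge 2$ be integers, let $h:\mathbb{R}^n\to\mathbb{R}^m$ be a function, let $R\in\mathbb{R}^{m\times m}$ be symmetric positive definite, and let $\bm{z}\in\mathbb{R}^m$. Let $\bm{x}_1^f,\dots,\bm{x}_N^f\in\mathbb{R}^n$ be a (fixed) forecast ensemble with mean $\bar{\bm{x}}^f=\frac1N\sum_i\bm{x}_i^f$ and anomaly matrix $A^f=[\bm{x}_1^f-\bar{\bm{x}}^f,\dots,\bm{x}_N^f-\bar{\bm{x}}^f]\in\mathbb{R}^{n\times N}$, and set $P^f=\frac{1}{N-1}A^f(A^f)^\top$. Let $\bm{z}_i^f=h(\bm{x}_i^f)$, $\bar{\bm{z}}^f=\frac1N\sum_i\bm{z}_i^f$, $\mathcal{Z}^f=[\bm{z}_1^f-\bar{\bm{z}}^f,\dots,\bm{z}_N^f-\bar{\bm{z}}^f]$, $P_{xz}^f=\frac{1}{N-1}A^f(\mathcal{Z}^f)^\top$, $S^f=\frac{1}{N-1}\mathcal{Z}^f(\mathcal{Z}^f)^\top+R$, $K=P_{xz}^f(S^f)^{-1}$, and $\bar{\bm{x}}^a=\bar{\bm{x}}^f+K(\bm{z}-\bar{\bm{z}}^f)$. Define the recentered ensemble $\bm{x}_i^{rc}=\bar{\bm{x}}^a+(\bm{x}_i^f-\bar{\bm{x}}^f)$, $\bm{z}_i^{rc}=h(\bm{x}_i^{rc})$, $\bar{\bm{z}}^{rc}=\frac1N\sum_i\bm{z}_i^{rc}$, $\mathcal{Z}^{rc}=[\bm{z}_1^{rc}-\bar{\bm{z}}^{rc},\dots,\bm{z}_N^{rc}-\bar{\bm{z}}^{rc}]$,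 $P_{xz}^{rc}=\frac{1}{N-1}A^f(\mathcal{Z}^{rc})^\top$, $S^{rc}=\frac{1}{N-1}\mathcal{Z}^{rc}(\mathcal{Z}^{rc})^\top+R$, and $$P^{a,rc}=P^f+KS^{rc}K^\top-K(P_{xz}^{rc})^\top-P_{xz}^{rc}K^\top .$$ Let $\bm{\eta}_1,\dots,\bm{\eta}_N$ be independent $\mathcal{N}(\bm{0},R)$ random vectors, define $\bm{x}_i^\star=\bm{x}_i^{rc}+K(\bm{z}+\bm{\eta}_i-\bm{z}_i^{rc})$, let $\bar{\bm{x}}^\star=\frac1N\sum_i\bm{x}_i^\star$, $A^\star=[\bm{x}_1^\star-\bar{\bm{x}}^\star,\dots,\bm{x}_N^\star-\bar{\bm{x}}^\star]$, the candidate analysis ensemble $\widetilde{X}^a=\bar{\bm{x}}^a\bm{1}^\top+A^\star$ (with $\bm{1}\in\mathbb{R}^N$ the all-ones vector), and $\widetilde{P}^{a,rc}=\frac{1}{N-1}A^\star(A^\star)^\top$. Assume the update is accepted, i.e. $\operatorname{tr}(P^{a,rc})\le\operatorname{tr}(P^f)$. Then $\frac1N\widetilde{X}^a\bm{1}=\bar{\bm{x}}^a$ exactly, and $\mathbb{E}[\widetilde{P}^{a,rc}]=P^{a,rc}$, where the expectation is over $\bm{\eta}_1,\dots,\bm{\eta}_N$ (with the forecast ensemble and $\bm{z}$ held fixed).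
   Context: This is the "recalibrated stochastic ensemble Kalman filter" analysis step for a measurement model $\bm{z}=h(\bm{x})+\bm{v}$, $\bm{v}\sim\mathcal{N}(\bm{0},R)$. All quantities other than the $\bm{\eta}_i$ are deterministic. *)

theory Defs
  imports "HOL-Analysis.Analysis" "HOL-Probability.Probability"
begin

(* Ensembles are indexed by a finite type 'N with N = CARD('N);
   state space R^n = real^'n, observation space R^m = real^'m. *)

definition ens_mean :: "('N::finite \<Rightarrow> real^'d) \<Rightarrow> real^'d" where
  "ens_mean X = (1 / real CARD('N)) *\<^sub>R (\<Sum>i\<in>UNIV. X i)"

definition anom :: "('N::finite \<Rightarrow> real^'d) \<Rightarrow> real^'N^'d" where
  "anom X = (\<chi> r i. (X i - ens_mean X) $ r)"

definition scov :: "real^'N::finite^'d \<Rightarrow> real^'N^'e \<Rightarrow> real^'e^'d" where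
  "scov A B = (1 / (real CARD('N) - 1)) *\<^sub>R (A ** transpose B)"

definition sym_posdef :: "real^'m^'m \<Rightarrow> bool" where
  "sym_posdef R \<longleftrightarrow> transpose R = R \<and> (\<forall>v. v \<noteq> 0 \<longrightarrow> v \<bullet> (R *v v) > 0)"

(* X is a Gaussian random vector N(0,R) on the probability space M (R positive definite):
   every nontrivial linear functional a.X is N(0, a^T R a) (Cramer-Wold definition). *)
definition gaussian_vec :: "'w measure \<Rightarrow> ('w \<Rightarrow> real^'m) \<Rightarrow> real^'m^'m \<Rightarrow> bool" where
  "gaussian_vec M X R \<longleftrightarrow> X \<in> borel_measurable M \<and>
     (\<forall>a. a \<noteq> 0 \<longrightarrow> distributed M lborel (\<lambda>w. a \<bullet> X w) (normal_density 0 (sqrt (a \<bullet> (R *v a)))))"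

definition Kgain :: "(real^'n \<Rightarrow> real^'m) \<Rightarrow> real^'m^'m \<Rightarrow> ('N::finite \<Rightarrow> real^'n) \<Rightarrow> real^'m^'n" where
  "Kgain h R xf = (let Zf = anom (\<lambda>i. h (xf i)) in
      scov (anom xf) Zf ** matrix_inv (scov Zf Zf + R))"

definition xa_mean :: "(real^'n \<Rightarrow> real^'m) \<Rightarrow> real^'m^'m \<Rightarrow> real^'m \<Rightarrow> ('N::finite \<Rightarrow> real^'n) \<Rightarrow> real^'n" where
  "xa_mean h R z xf = ens_mean xf + Kgain h R xf *v (z - ens_mean (\<lambda>i. h (xf i)))"

definition x_rc :: "(real^'n \<Rightarrow> real^'m) \<Rightarrow> real^'m^'m \<Rightarrow> real^'m \<Rightarrow> ('N::finite \<Rightarrow> real^'n) \<Rightarrow> 'N \<Rightarrow> real^'n" where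
  "x_rc h R z xf i = xa_mean h R z xf + (xf i - ens_mean xf)"

definition Pa_rc :: "(real^'n \<Rightarrow> real^'m) \<Rightarrow> real^'m^'m \<Rightarrow> real^'m \<Rightarrow> ('N::finite \<Rightarrow> real^'n) \<Rightarrow> real^'n^'n" where
  "Pa_rc h R z xf = (let Af = anom xf; K = Kgain h R xf;
        Zrc = anom (\<lambda>i. h (x_rc h R z xf i));
        Pxz = scov Af Zrc; Src = scov Zrc Zrc + R in
      scov Af Af + K ** Src ** transpose K - K ** transpose Pxz - Pxz ** transpose K)"

definition x_star :: "(real^'n \<Rightarrow> real^'m) \<Rightarrow> real^'m^'m \<Rightarrow> real^'m \<Rightarrow> ('N::finite \<Rightarrow> real^'n) \<Rightarrow> ('N \<Rightarrow> real^'m) \<Rightarrow> 'N \<Rightarrow> real^'n" where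
  "x_star h R z xf eta i = x_rc h R z xf i + Kgain h R xf *v (z + eta i - h (x_rc h R z xf i))"

definition Xa_tilde :: "(real^'n \<Rightarrow> real^'m) \<Rightarrow> real^'m^'m \<Rightarrow> real^'m \<Rightarrow> ('N::finite \<Rightarrow> real^'n) \<Rightarrow> ('N \<Rightarrow> real^'m) \<Rightarrow> real^'N^'n" where
  "Xa_tilde h R z xf eta = (\<chi> r i. (xa_mean h R z xf) $ r) + anom (x_star h R z xf eta)"

definition Pa_tilde :: "(real^'n \<Rightarrow> real^'m) \<Rightarrow> real^'m^'m \<Rightarrow> real^'m \<Rightarrow> ('N::finite \<Rightarrow> real^'n) \<Rightarrow> ('N \<Rightarrow> real^'m) \<Rightarrow> real^'n^'n" where
  "Pa_tilde h R z xf eta = scov (anom (x_star h R z xf eta)) (anom (x_star h R z xf eta))"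

end

theory Submission
  imports Defs
begin

text \<open>
  Each perturbed member is an affine function of the forecast member and of its own noise,
  x_i^* = c + x_i^f - K h(x_i^rc) + K eta_i, so the anomalies of the candidate ensemble are
  A^* = D + K A^eta with the deterministic matrix D = A^f - K Z^rc. Anomalies have zero row
  sums, which gives the mean exactly. The noise anomalies A^eta have mean zero and, because
  of the factor 1/(N-1), their sample covariance is an unbiased estimator of R. Hence the cross
  terms of scov A^* A^* vanish in expectation and E[scov A^* A^*] = scov D D + K R K^T, and
  expanding scov D D by bilinearity turns this into the formula defining P^{a,rc}.
\<close>

lemma matrix_add_rdistrib: "((A::real^'b^'a) + B) ** C = A ** C + B ** C"
  by (simp add: vec_eq_iff matrix_matrix_mult_def sum.distrib ring_distribs)

lemma matrix_diff_rdistrib: "((A::real^'b^'a) - B) ** C = A ** C - B ** C"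
  by (simp add: vec_eq_iff matrix_matrix_mult_def sum_subtractf ring_distribs)

lemma transpose_add: "transpose (A + B) = transpose A + transpose B"
  by (simp add: transpose_def vec_eq_iff)

lemma scov_add_left: "scov (A + B) C = scov A C + scov B C"
  by (simp add: scov_def matrix_add_rdistrib scaleR_add_right)

lemma scov_add_right: "scov A (B + C) = scov A B + scov A C"
  by (simp add: scov_def transpose_add matrix_add_ldistrib scaleR_add_right)

lemma scov_scaleR_left: "scov (c *\<^sub>R A) B = c *\<^sub>R scov A B"
  by (simp add: scov_def scalar_matrix_assoc[symmetric])

lemma scov_scaleR_right: "scov A (c *\<^sub>R B) = c *\<^sub>R scov A B"
  by (simp add: scov_def transpose_scalar matrix_scalar_ac scalar_matrix_assoc[symmetric])

lemma scov_minus_left: "scov (- A) B = - scov A B"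
  using scov_scaleR_left[of "-1" A B] by simp

lemma scov_minus_right: "scov A (- B) = - scov A B"
  using scov_scaleR_right[of A "-1" B] by simp

lemma scov_diff_left: "scov (A - B) C = scov A C - scov B C"
  using scov_add_left[of A "- B" C] by (simp add: scov_minus_left)

lemma scov_diff_right: "scov A (B - C) = scov A B - scov A C"
  using scov_add_right[of A B "- C"] by (simp add: scov_minus_right)

lemma scov_matrix_mult_left: "scov (K ** A) B = K ** scov A B"
  by (simp add: scov_def matrix_mul_assoc matrix_scalar_ac scalar_matrix_assoc)

lemma scov_matrix_mult_right: "scov A (K ** B) = scov A B ** transpose K"
  by (simp add: scov_def matrix_transpose_mul matrix_mul_assoc scalar_matrix_assoc)

lemma transpose_scov: "transpose (scov A B) = scov B A"
  by (simp add: scov_def transpose_scalar matrix_transpose_mul)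

lemma bounded_linear_matrix_sandwich: "bounded_linear (\<lambda>X :: real^'b^'a. A ** X ** B)"
  unfolding linear_conv_bounded_linear[symmetric]
  by (rule linearI) (simp_all add: matrix_add_ldistrib matrix_add_rdistrib matrix_scalar_ac scalar_matrix_assoc)

lemma scov_gain_identity:
  "scov (A - K ** Z) (A - K ** Z) + K ** R ** transpose K
     = scov A A + K ** (scov Z Z + R) ** transpose K - K ** transpose (scov A Z) - scov A Z ** transpose K"
  by (simp add: scov_diff_left scov_diff_right scov_matrix_mult_left scov_matrix_mult_right
      transpose_scov matrix_add_ldistrib matrix_add_rdistrib matrix_diff_rdistrib matrix_mul_assoc)

lemma has_bochner_integral_vec:
  fixes f :: "'w \<Rightarrow> 'a::euclidean_space^'n"
  assumes "\<And>i. has_bochner_integral M (\<lambda>w. f w $ i) (c $ i)"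
  shows "has_bochner_integral M f c"
proof -
  have axis_linear: "bounded_linear (axis i :: 'a \<Rightarrow> 'a^'n)" for i
    by (simp add: linear_conv_bounded_linear[symmetric] linear_iff axis_def vec_eq_iff)
  have sum_axis: "(\<Sum>i\<in>UNIV. axis i (v $ i)) = v" for v :: "'a^'n"
    by (simp add: vec_eq_iff sum_component axis_def)
  have "has_bochner_integral M (\<lambda>w. \<Sum>i\<in>UNIV. axis i (f w $ i)) (\<Sum>i\<in>UNIV. axis i (c $ i))"
    by (intro has_bochner_integral_sum has_bochner_integral_bounded_linear[OF axis_linear] assms)
  then show ?thesis by (simp only: sum_axis)
qed

lemma has_bochner_integral_const_prob:
  fixes c :: "'a::{banach,second_countable_topology}"
  assumes "prob_space M"
  shows "has_bochner_integral M (\<lambda>_. c) c"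
proof -
  interpret prob_space M by (rule assms)
  show ?thesis by (simp add: has_bochner_integral_iff prob_space)
qed

lemma gaussian_vec_linear_moments:
  assumes P: "prob_space M" and X: "gaussian_vec M X R" and R: "sym_posdef R"
  shows "has_bochner_integral M (\<lambda>w. a \<bullet> X w) 0"
    and "has_bochner_integral M (\<lambda>w. (a \<bullet> X w)\<^sup>2) (a \<bullet> (R *v a))"
proof -
  interpret prob_space M by (rule P)
  have "has_bochner_integral M (\<lambda>w. a \<bullet> X w) 0 \<and>
        has_bochner_integral M (\<lambda>w. (a \<bullet> X w)\<^sup>2) (a \<bullet> (R *v a))"
  proof (cases "a = 0")
    case True
    then show ?thesis by (simp add: has_bochner_integral_zero)
  next
    case False
    define \<sigma> where "\<sigma> = sqrt (a \<bullet> (R *v a))"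
    have pos: "a \<bullet> (R *v a) > 0" using R False unfolding sym_posdef_def by auto
    then have \<sigma>: "\<sigma> > 0" unfolding \<sigma>_def by simp
    have D: "distributed M lborel (\<lambda>w. a \<bullet> X w) (normal_density 0 \<sigma>)"
      using X False unfolding gaussian_vec_def \<sigma>_def by auto
    have "integrable M (\<lambda>w. a \<bullet> X w)" "integrable M (\<lambda>w. (a \<bullet> X w)\<^sup>2)"
      using distributed_integrable[OF D, of "\<lambda>x. x"] distributed_integrable[OF D, of "\<lambda>x. x\<^sup>2"]
        integrable_normal_moment_nz_1[OF \<sigma>, of 0] integrable_normal_moment[OF \<sigma>, of 0 2]
      by simp_all
    moreover have "expectation (\<lambda>w. a \<bullet> X w) = 0" "expectation (\<lambda>w. (a \<bullet> X w)\<^sup>2) = \<sigma>\<^sup>2"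
      using normal_distributed_expectation[OF \<sigma> D] normal_distributed_variance[OF \<sigma> D] by simp_all
    ultimately show ?thesis
      using pos by (simp add: has_bochner_integral_iff \<sigma>_def)
  qed
  then show "has_bochner_integral M (\<lambda>w. a \<bullet> X w) 0"
    and "has_bochner_integral M (\<lambda>w. (a \<bullet> X w)\<^sup>2) (a \<bullet> (R *v a))"
    by simp_all
qed

lemma sym_posdef_inner_commute:
  assumes "sym_posdef R"
  shows "b \<bullet> (R *v a) = a \<bullet> (R *v b)"
proof -
  have "transpose R = R" using assms by (simp add: sym_posdef_def)
  then have "a \<bullet> (R *v b) = (a v* transpose R) \<bullet> b"
    by (simp only: dot_lmul_matrix)
  then show ?thesis
    by (simp add: inner_commute)
qed

lemma gaussian_vec_covariance:
  assumes P: "prob_space M" and X: "gaussian_vec M X R" and R: "sym_posdef R"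
  shows "has_bochner_integral M (\<lambda>w. (a \<bullet> X w) * (b \<bullet> X w)) (a \<bullet> (R *v b))"
proof -
  note sq = gaussian_vec_linear_moments(2)[OF P X R]
  have "has_bochner_integral M (\<lambda>w. (((a + b) \<bullet> X w)\<^sup>2 - (a \<bullet> X w)\<^sup>2 - (b \<bullet> X w)\<^sup>2) / 2)
      (((a + b) \<bullet> (R *v (a + b)) - a \<bullet> (R *v a) - b \<bullet> (R *v b)) / 2)"
    by (intro has_bochner_integral_divide_zero has_bochner_integral_diff sq)
  moreover have "((a + b) \<bullet> (R *v (a + b)) - a \<bullet> (R *v a) - b \<bullet> (R *v b)) / 2 = a \<bullet> (R *v b)"
    using sym_posdef_inner_commute[OF R, of b a]
    by (simp add: matrix_vector_right_distrib inner_add_left inner_add_right)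
  ultimately show ?thesis
    by (simp add: inner_add_left power2_eq_square algebra_simps)
qed

lemma gaussian_vec_component_moments:
  assumes P: "prob_space M" and X: "gaussian_vec M X R" and R: "sym_posdef R"
  shows "has_bochner_integral M (\<lambda>w. X w $ k) 0"
    and "has_bochner_integral M (\<lambda>w. X w $ k * X w $ l) (R $ k $ l)"
  using gaussian_vec_linear_moments(1)[OF P X R, of "axis k 1"]
    gaussian_vec_covariance[OF P X R, of "axis k 1" "axis l 1"]
  by (simp_all add: inner_axis' matrix_vector_mult_basis column_def)

lemma has_bochner_integral_indep_component_product:
  fixes X :: "'i \<Rightarrow> 'w \<Rightarrow> real^'m"
  assumes P: "prob_space M" and indep: "prob_space.indep_vars M (\<lambda>_. borel) X I"
    and "i \<in> I" "j \<in> I" "i \<noteq> j"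
    and mean: "\<And>i k. has_bochner_integral M (\<lambda>w. X i w $ k) 0"
  shows "has_bochner_integral M (\<lambda>w. X i w $ k * X j w $ l) 0"
proof -
  interpret prob_space M by (rule P)
  define Y where "Y t w = X t w $ (if t = i then k else l)" for t w
  have "indep_vars (\<lambda>_. borel) Y {i, j}"
    unfolding Y_def
    by (rule indep_vars_compose2[where X = X and M' = "\<lambda>_. borel"])
       (use assms in \<open>auto intro: indep_vars_subset[OF indep]\<close>)
  moreover have "integrable M (Y t)" "integral\<^sup>L M (Y t) = 0" for t
    using mean[of t "if t = i then k else l"] unfolding Y_def by (simp_all add: has_bochner_integral_iff)
  ultimately have "has_bochner_integral M (\<lambda>w. \<Prod>t\<in>{i, j}. Y t w) 0"
    unfolding has_bochner_integral_iff
    by (simp only: indep_vars_integrable indep_vars_lebesgue_integral finite.emptyI finite_insert)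
       (use \<open>i \<noteq> j\<close> in simp)
  then show ?thesis
    using \<open>i \<noteq> j\<close> by (simp add: Y_def)
qed

lemma anom_nth: "anom X $ r $ i = X i $ r - (\<Sum>j\<in>UNIV. X j $ r) / real CARD('N)"
  for X :: "'N::finite \<Rightarrow> real^'d"
  by (simp add: anom_def ens_mean_def sum_component)

lemma anom_add: "anom (\<lambda>i. X i + Y i) = anom X + anom Y"
  by (simp add: anom_nth vec_eq_iff sum.distrib add_divide_distrib)

lemma anom_diff: "anom (\<lambda>i. X i - Y i) = anom X - anom Y"
  by (simp add: anom_nth vec_eq_iff sum_subtractf diff_divide_distrib)

lemma anom_const: "anom (\<lambda>_. c) = 0"
  by (simp add: anom_nth vec_eq_iff)

lemma ens_mean_matrix_vector_mult: "ens_mean (\<lambda>i. K *v X i) = K *v ens_mean X"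
proof -
  interpret bounded_linear "(*v) K" by (rule matrix_vector_mul_bounded_linear)
  show ?thesis by (simp add: ens_mean_def sum scale)
qed

lemma anom_matrix_vector_mult: "anom (\<lambda>i. K *v X i) = K ** anom X"
proof -
  have "anom (\<lambda>i. K *v X i) = (\<chi> r i. (K *v (X i - ens_mean X)) $ r)"
    by (simp add: anom_def ens_mean_matrix_vector_mult matrix_vector_mult_diff_distrib)
  also have "\<dots> = K ** anom X"
    by (simp add: anom_def vec_eq_iff matrix_matrix_mult_def matrix_vector_mult_def)
  finally show ?thesis .
qed

lemma anom_mult_ones: "anom X *v 1 = 0"
  by (simp add: anom_def ens_mean_def vec_eq_iff matrix_vector_mult_def sum_subtractf sum_component)

lemma scov_nth: "scov A B $ r $ s = (\<Sum>i\<in>UNIV. A $ r $ i * B $ s $ i) / (real CARD('N) - 1)"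
  for A :: "real^'N::finite^'d" and B :: "real^'N^'e"
  by (simp add: scov_def matrix_matrix_mult_def transpose_def)

lemma sum_centred_products:
  fixes x y :: "'i \<Rightarrow> real"
  shows "(\<Sum>i\<in>A. (x i - sum x A / card A) * (y i - sum y A / card A))
       = (\<Sum>i\<in>A. x i * y i) - sum x A * sum y A / card A"
proof (cases "finite A \<and> A \<noteq> {}")
  case True
  then have "card A \<noteq> 0" by simp
  then show ?thesis
    by (simp add: algebra_simps sum.distrib sum_subtractf sum_distrib_left[symmetric]
        sum_distrib_right[symmetric] sum_divide_distrib[symmetric] power2_eq_square)
next
  case False
  then show ?thesis by auto
qed

lemma has_bochner_integral_scov_anom:
  fixes eta :: "'N::finite \<Rightarrow> 'w \<Rightarrow> real^'m"
  assumes N: "CARD('N) \<ge> 2"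
    and mean: "\<And>i k. has_bochner_integral M (\<lambda>w. eta i w $ k) 0"
    and cov: "\<And>i j k l. has_bochner_integral M (\<lambda>w. eta i w $ k * eta j w $ l)
                (if i = j then R $ k $ l else 0)"
  shows "has_bochner_integral M (\<lambda>w. anom (\<lambda>i. eta i w)) 0"
    and "has_bochner_integral M (\<lambda>w. scov (anom (\<lambda>i. eta i w)) (anom (\<lambda>i. eta i w))) R"
proof -
  define n where "n = real CARD('N)"
  have n: "n \<ge> 2" using N by (simp add: n_def)
  show "has_bochner_integral M (\<lambda>w. anom (\<lambda>i. eta i w)) 0"
  proof (intro has_bochner_integral_vec)
    fix r i
    have "has_bochner_integral M (\<lambda>w. eta i w $ r - (\<Sum>j\<in>UNIV. eta j w $ r) / n)
        (0 - (\<Sum>j\<in>(UNIV::'N set). 0) / n)"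
      by (intro has_bochner_integral_diff has_bochner_integral_divide_zero has_bochner_integral_sum mean)
    then show "has_bochner_integral M (\<lambda>w. anom (\<lambda>i. eta i w) $ r $ i) (0 $ r $ i)"
      by (simp add: anom_nth n_def)
  qed
  show "has_bochner_integral M (\<lambda>w. scov (anom (\<lambda>i. eta i w)) (anom (\<lambda>i. eta i w))) R"
  proof (intro has_bochner_integral_vec)
    fix k l
    have diag: "has_bochner_integral M (\<lambda>w. eta i w $ k * eta i w $ l) (R $ k $ l)" for i
      using cov[where i = i and j = i and k = k and l = l] by simp
    have "has_bochner_integral M
        (\<lambda>w. ((\<Sum>i\<in>UNIV. eta i w $ k * eta i w $ l)
               - (\<Sum>i\<in>UNIV. \<Sum>j\<in>UNIV. eta i w $ k * eta j w $ l) / n) / (n - 1))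
        (((\<Sum>i\<in>(UNIV::'N set). R $ k $ l)
          - (\<Sum>i\<in>UNIV. \<Sum>j\<in>(UNIV::'N set). if i = j then R $ k $ l else 0) / n) / (n - 1))"
      by (intro has_bochner_integral_divide_zero has_bochner_integral_diff has_bochner_integral_sum diag cov)
    moreover have "((\<Sum>i\<in>(UNIV::'N set). R $ k $ l)
          - (\<Sum>i\<in>UNIV. \<Sum>j\<in>(UNIV::'N set). if i = j then R $ k $ l else 0) / n) / (n - 1) = R $ k $ l"
      using n by (simp add: n_def[symmetric] field_simps)
    moreover have "scov (anom (\<lambda>i. eta i w)) (anom (\<lambda>i. eta i w)) $ k $ l
        = ((\<Sum>i\<in>UNIV. eta i w $ k * eta i w $ l)
           - (\<Sum>i\<in>UNIV. \<Sum>j\<in>UNIV. eta i w $ k * eta j w $ l) / n) / (n - 1)" for w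
      using sum_centred_products[of "\<lambda>i. eta i w $ k" UNIV "\<lambda>i. eta i w $ l"]
      by (simp add: scov_nth anom_nth n_def sum_product)
    ultimately show "has_bochner_integral M
        (\<lambda>w. scov (anom (\<lambda>i. eta i w)) (anom (\<lambda>i. eta i w)) $ k $ l) (R $ k $ l)"
      by simp
  qed
qed

lemma has_bochner_integral_scov_perturbed:
  fixes E :: "'w \<Rightarrow> real^'N::finite^'m" and K :: "real^'m^'n"
  assumes P: "prob_space M"
    and mean: "has_bochner_integral M E 0"
    and cov: "has_bochner_integral M (\<lambda>w. scov (E w) (E w)) S"
  shows "has_bochner_integral M (\<lambda>w. scov (D + K ** E w) (D + K ** E w))
           (scov D D + K ** S ** transpose K)"
proof -
  have expand: "scov (D + K ** E w) (D + K ** E w)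
      = scov D D + (scov D (E w) ** transpose K + K ** scov (E w) D) + K ** scov (E w) (E w) ** transpose K"
    for w by (simp add: scov_add_left scov_add_right scov_matrix_mult_left scov_matrix_mult_right
        matrix_add_rdistrib matrix_mul_assoc)
  have cross: "bounded_linear (\<lambda>X. scov D X ** transpose K + K ** scov X D)"
    unfolding linear_conv_bounded_linear[symmetric]
    by (rule linearI) (simp_all add: scov_add_left scov_add_right scov_scaleR_left scov_scaleR_right
        matrix_add_ldistrib matrix_add_rdistrib matrix_scalar_ac scalar_matrix_assoc[symmetric]
        scaleR_add_right)
  have "has_bochner_integral M (\<lambda>w. scov D (E w) ** transpose K + K ** scov (E w) D) 0"
    using has_bochner_integral_bounded_linear[OF cross mean]
    by (simp add: linear_0[OF bounded_linear.linear[OF cross]])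
  moreover have "has_bochner_integral M (\<lambda>w. K ** scov (E w) (E w) ** transpose K) (K ** S ** transpose K)"
    by (rule has_bochner_integral_bounded_linear[OF bounded_linear_matrix_sandwich cov])
  ultimately show ?thesis
    unfolding expand
    using has_bochner_integral_add[OF has_bochner_integral_add[OF has_bochner_integral_const_prob[OF P]]]
    by fastforce
qed

lemma indep_gaussian_vec_moments:
  fixes eta :: "'i \<Rightarrow> 'w \<Rightarrow> real^'m"
  assumes P: "prob_space M" and R: "sym_posdef R"
    and gauss: "\<And>i. gaussian_vec M (eta i) R"
    and indep: "prob_space.indep_vars M (\<lambda>_. borel) eta UNIV"
  shows "has_bochner_integral M (\<lambda>w. eta i w $ k) 0"
    and "has_bochner_integral M (\<lambda>w. eta i w $ k * eta j w $ l) (if i = j then R $ k $ l else 0)"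
  using gaussian_vec_component_moments[OF P gauss R]
    has_bochner_integral_indep_component_product[OF P indep, of i j k l]
  by auto

lemma x_star_anom:
  fixes h :: "real^'n \<Rightarrow> real^'m" and R :: "real^'m^'m" and xf :: "'N::finite \<Rightarrow> real^'n"
  defines "K \<equiv> Kgain h R xf"
  shows "anom (x_star h R z xf e) = (anom xf - K ** anom (\<lambda>i. h (x_rc h R z xf i))) + K ** anom e"
proof -
  define c where "c = xa_mean h R z xf - ens_mean xf + K *v z"
  have "x_star h R z xf e = (\<lambda>i. (c + xf i) + K *v e i - K *v h (x_rc h R z xf i))"
    by (auto simp: x_star_def x_rc_def c_def K_def matrix_vector_right_distrib
        matrix_vector_mult_diff_distrib)
  then show ?thesis
    by (simp add: anom_diff anom_add anom_const anom_matrix_vector_mult)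
qed

lemma Pa_rc_eq:
  fixes h :: "real^'n \<Rightarrow> real^'m" and R :: "real^'m^'m" and z :: "real^'m"
    and xf :: "'N::finite \<Rightarrow> real^'n"
  defines "D \<equiv> anom xf - Kgain h R xf ** anom (\<lambda>i. h (x_rc h R z xf i))"
  shows "Pa_rc h R z xf = scov D D + Kgain h R xf ** R ** transpose (Kgain h R xf)"
  unfolding Pa_rc_def Let_def D_def by (rule scov_gain_identity[symmetric])

lemma Xa_tilde_mean:
  fixes h :: "real^'n \<Rightarrow> real^'m" and xf :: "'N::finite \<Rightarrow> real^'n"
  shows "(1 / real CARD('N)) *\<^sub>R (Xa_tilde h R z xf e *v 1) = xa_mean h R z xf"
proof -
  have "(\<chi> r i. v $ r) *v (1 :: real^'N) = real CARD('N) *\<^sub>R v" for v :: "real^'n"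
    by (simp add: vec_eq_iff matrix_vector_mult_def)
  then show ?thesis
    by (simp add: Xa_tilde_def matrix_vector_mult_add_rdistrib anom_mult_ones)
qed

theorem proposition1:
  fixes h :: "real^'n \<Rightarrow> real^'m"
    and R :: "real^'m^'m"
    and z :: "real^'m"
    and xf :: "'N::finite \<Rightarrow> real^'n"
    and M :: "'w measure"
    and eta :: "'N \<Rightarrow> 'w \<Rightarrow> real^'m"
  assumes N2: "CARD('N) \<ge> 2"
    and R_spd: "sym_posdef R"
    and P: "prob_space M"
    and gauss: "\<And>i. gaussian_vec M (eta i) R"
    and indep: "prob_space.indep_vars M (\<lambda>_. borel) eta UNIV"
    and accepted: "trace (Pa_rc h R z xf) \<le> trace (scov (anom xf) (anom xf))"
  shows "(\<forall>w\<in>space M. (1 / real CARD('N)) *\<^sub>R (Xa_tilde h R z xf (\<lambda>i. eta i w) *v 1)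
            = xa_mean h R z xf)
     \<and> integrable M (\<lambda>w. Pa_tilde h R z xf (\<lambda>i. eta i w))
     \<and> integral\<^sup>L M (\<lambda>w. Pa_tilde h R z xf (\<lambda>i. eta i w)) = Pa_rc h R z xf"
proof -
  have "has_bochner_integral M (\<lambda>w. anom (\<lambda>i. eta i w)) 0"
    and "has_bochner_integral M (\<lambda>w. scov (anom (\<lambda>i. eta i w)) (anom (\<lambda>i. eta i w))) R"
    using has_bochner_integral_scov_anom[OF N2 indep_gaussian_vec_moments[OF P R_spd gauss indep]]
    by blast+
  then have "has_bochner_integral M (\<lambda>w. Pa_tilde h R z xf (\<lambda>i. eta i w)) (Pa_rc h R z xf)"
    unfolding Pa_tilde_def x_star_anom Pa_rc_eq
    by (rule has_bochner_integral_scov_perturbed[OF P])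
  then show ?thesis
    by (simp add: Xa_tilde_mean has_bochner_integral_iff)
qed

end
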